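(* $\mathsf{ConC}_{[0,1]}\equiv_{sW}\overline{\mathsf{ConC}_{[0,1]}}\equiv_{sW}\mathsf{T}\mathsf{ConC}_{[0,1]}$.
   Context: A problem $f:\subseteq X\rightrightarrows Y$ between represented spaces is a partial multi-valued map; $F\vdash f$ means $\delta_YF(p)\in f(\delta_X(p))$ whenever $\delta_X(p)\in\mathrm{dom}(f)$; $f\le_{sW}g$ iff there are computable $H,K$ with $HGK\vdash f$ for all $G\vdash g$. $[0,1]$ is a computable metric space with the Cauchy representation; $\mathcal A_-([0,1])$ is the space of closed subsets represented by $p\mapsto[0,1]\setminus\bigcup_nB_{p(n)}$ where $(B_n)$ is a standard enumeration of rational open balls (including empty ones). $\mathsf{ConC}_{[0,1]}:\subseteq\mathcal A_-([0,1])\rightrightarrows[0,1]$, $A\mapsto A$, is defined exactly on the nonempty connected closed sets. For $p\in\mathbb{N}^\mathbb{N}$, $p-1$ is the concatenation of $p(0)-1,p(1)-1,\dots$ with $0-1$ the empty word; the completion of $(X,\delta_X)$ is $\overline X=X\cup\{\bot\}$ with $\delta_{\overline X}(p)=\delta_X(p-1)$ if $p-1$ is an infinite sequence in $\mathrm{dom}(\delta_X)$ and $\bot$ otherwise. For $f:\subseteq X\rightrightarrows Y$: $\overline f:\overline X\rightrightarrows\overline Y$ equals $f$ on $\mathrm{dom}(f)$ and $\overline Y$ elsewhere; $\mathsf Tf:X\rightrightarrows Y$ equals $f$ on $\mathrm{dom}(f)$ and $Y$ elsewhere. *)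

theory Defs
  imports "HOL-Analysis.Analysis" "HOL-Library.Nat_Bijection" "HOL-Library.Infinite_Set"
begin

fun prec :: "(nat list \<Rightarrow> nat option) \<Rightarrow> (nat list \<Rightarrow> nat option) \<Rightarrow> nat \<Rightarrow> nat list \<Rightarrow> nat option"
  where
  "prec f g 0 ys = f ys"
| "prec f g (Suc k) ys = (case prec f g k ys of None \<Rightarrow> None | Some r \<Rightarrow> g (k # r # ys))"

definition mu :: "(nat list \<Rightarrow> nat option) \<Rightarrow> nat list \<Rightarrow> nat option" where
  "mu f xs = (if \<exists>n. f (n # xs) = Some 0 \<and> (\<forall>m<n. f (m # xs) \<noteq> None)
              then Some (LEAST n. f (n # xs) = Some 0 \<and> (\<forall>m<n. f (m # xs) \<noteq> None))
              else None)"

inductive partrec :: "nat \<Rightarrow> (nat list \<Rightarrow> nat option) \<Rightarrow> bool" where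
  pr_zero: "partrec n (\<lambda>xs. Some 0)"
| pr_succ: "partrec 1 (\<lambda>xs. Some (Suc (hd xs)))"
| pr_proj: "i < n \<Longrightarrow> partrec n (\<lambda>xs. Some (xs ! i))"
| pr_comp: "partrec m f \<Longrightarrow> length gs = m \<Longrightarrow> (\<forall>g\<in>set gs. partrec n g) \<Longrightarrow>
     partrec n (\<lambda>xs. if (\<forall>g\<in>set gs. g xs \<noteq> None) then f (map (\<lambda>g. the (g xs)) gs) else None)"
| pr_prim: "partrec n f \<Longrightarrow> partrec (Suc (Suc n)) g \<Longrightarrow>
     partrec (Suc n) (\<lambda>xs. prec f g (hd xs) (tl xs))"
| pr_mu: "partrec (Suc n) f \<Longrightarrow> partrec n (mu f)"

type_synonym baire = "nat \<Rightarrow> nat"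

definition prefix_code :: "baire \<Rightarrow> nat \<Rightarrow> nat" where
  "prefix_code p k = list_encode (map p [0..<k])"

text \<open>F is computable iff there is a total recursive g such that for p in dom F,
  the n-th output symbol F(p)(n) is eventually announced as g(n, p[k]) = F(p)(n)+1,
  and g(n, p[k]) is 0 (no answer yet) or the correct answer plus one.\<close>
definition computable :: "(baire \<Rightarrow> baire option) \<Rightarrow> bool" where
  "computable F \<longleftrightarrow> (\<exists>g. partrec 2 g \<and> (\<forall>x y. g [x, y] \<noteq> None) \<and>
     (\<forall>p q. F p = Some q \<longrightarrow> (\<forall>n.
        (\<exists>k. g [n, prefix_code p k] \<noteq> Some 0) \<and>
        (\<forall>k. g [n, prefix_code p k] \<noteq> Some 0 \<longrightarrow> g [n, prefix_code p k] = Some (Suc (q n))))))"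

text \<open>A representation is a partial map delta from Baire space; the represented space is its range.
  A problem is a multi-valued map f with dom f = {x. f x \<noteq> {}}.\<close>

definition rspace :: "(baire \<Rightarrow> 'a option) \<Rightarrow> 'a set" where
  "rspace \<delta> = {x. \<exists>p. \<delta> p = Some x}"

definition realizes :: "(baire \<Rightarrow> 'a option) \<Rightarrow> (baire \<Rightarrow> 'b option) \<Rightarrow> (baire \<Rightarrow> baire option)
    \<Rightarrow> ('a \<Rightarrow> 'b set) \<Rightarrow> bool" where
  "realizes \<delta>X \<delta>Y F f \<longleftrightarrow> (\<forall>p x. \<delta>X p = Some x \<longrightarrow> f x \<noteq> {} \<longrightarrow>
      (\<exists>q y. F p = Some q \<and> \<delta>Y q = Some y \<and> y \<in> f x))"

definition sW_le ::
  "(baire \<Rightarrow> 'a option) \<Rightarrow> (baire \<Rightarrow> 'b option) \<Rightarrow> ('a \<Rightarrow> 'b set) \<Rightarrow>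
   (baire \<Rightarrow> 'c option) \<Rightarrow> (baire \<Rightarrow> 'd option) \<Rightarrow> ('c \<Rightarrow> 'd set) \<Rightarrow> bool" where
  "sW_le \<delta>X \<delta>Y f \<delta>Z \<delta>W g \<longleftrightarrow> (\<exists>H K. computable H \<and> computable K \<and>
     (\<forall>G. realizes \<delta>Z \<delta>W G g \<longrightarrow>
        realizes \<delta>X \<delta>Y (\<lambda>p. Option.bind (K p) (\<lambda>r. Option.bind (G r) H)) f))"

definition sW_eq ::
  "(baire \<Rightarrow> 'a option) \<Rightarrow> (baire \<Rightarrow> 'b option) \<Rightarrow> ('a \<Rightarrow> 'b set) \<Rightarrow>
   (baire \<Rightarrow> 'c option) \<Rightarrow> (baire \<Rightarrow> 'd option) \<Rightarrow> ('c \<Rightarrow> 'd set) \<Rightarrow> bool" where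
  "sW_eq \<delta>X \<delta>Y f \<delta>Z \<delta>W g \<longleftrightarrow> sW_le \<delta>X \<delta>Y f \<delta>Z \<delta>W g \<and> sW_le \<delta>Z \<delta>W g \<delta>X \<delta>Y f"

text \<open>p - 1: drop the zeros of p and subtract one from the remaining entries; it is an
  infinite sequence iff p has infinitely many nonzero entries.\<close>
definition minus_one :: "baire \<Rightarrow> baire" where
  "minus_one p n = p (enumerate {i. 0 < p i} n) - 1"

text \<open>Completion: bottom is None, x is Some x.\<close>
definition compl_rep :: "(baire \<Rightarrow> 'a option) \<Rightarrow> baire \<Rightarrow> 'a option option" where
  "compl_rep \<delta> p = Some (if infinite {i. 0 < p i} then \<delta> (minus_one p) else None)"

definition compl_prob :: "(baire \<Rightarrow> 'a option) \<Rightarrow> (baire \<Rightarrow> 'b option) \<Rightarrow> ('a \<Rightarrow> 'b set)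
    \<Rightarrow> 'a option \<Rightarrow> 'b option set" where
  "compl_prob \<delta>X \<delta>Y f u = (case u of
       Some x \<Rightarrow> (if x \<in> rspace \<delta>X \<and> f x \<noteq> {} then Some ` f x else rspace (compl_rep \<delta>Y))
     | None \<Rightarrow> rspace (compl_rep \<delta>Y))"

definition T_prob :: "(baire \<Rightarrow> 'a option) \<Rightarrow> (baire \<Rightarrow> 'b option) \<Rightarrow> ('a \<Rightarrow> 'b set)
    \<Rightarrow> 'a \<Rightarrow> 'b set" where
  "T_prob \<delta>X \<delta>Y f x = (if x \<in> rspace \<delta>X \<and> f x \<noteq> {} then f x else rspace \<delta>Y)"

definition qnum :: "nat \<Rightarrow> real" where
  "qnum n = real_of_int (int_decode (fst (prod_decode n))) / real (Suc (snd (prod_decode n)))"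

definition delta_I :: "baire \<Rightarrow> real option" where
  "delta_I p = (if (\<forall>n k. n \<le> k \<longrightarrow> \<bar>qnum (p n) - qnum (p k)\<bar> \<le> (1/2) ^ n)
                    \<and> lim (\<lambda>n. qnum (p n)) \<in> {0..1}
                then Some (lim (\<lambda>n. qnum (p n))) else None)"

text \<open>Standard enumeration of rational open balls (radius \<le> 0 gives the empty ball).\<close>
definition rball :: "nat \<Rightarrow> real set" where
  "rball n = ball (qnum (fst (prod_decode n))) (qnum (snd (prod_decode n)))"

definition delta_A :: "baire \<Rightarrow> real set option" where
  "delta_A p = Some ({0..1} - (\<Union>n. rball (p n)))"

definition ConC :: "real set \<Rightarrow> real set" where
  "ConC A = (if A \<noteq> {} \<and> connected A \<and> closed A \<and> A \<subseteq> {0..1} then A else {})"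

end

theory Submission
  imports Defs
begin

text \<open>
  Given negative information about a closed set \<open>A \<subseteq> [0,1]\<close>, i.e. an enumeration of rational
  balls whose union is the complement, we compute an enumeration of a subsequence of these balls
  whose complement is always a nonempty closed interval, and which equals \<open>A\<close> whenever \<open>A\<close> is
  nonempty and connected. A ball is kept back as long as possible: at stage \<open>t\<close> it is released
  only if the first \<open>t\<close> balls do not yet cover \<open>[0,1]\<close> and they cover everything between it and
  one of the endpoints \<open>0\<close>, \<open>1\<close>. Released balls therefore only eat into the set from the two ends,
  which keeps the complement connected, and a compactness argument shows that it never becomes
  empty and that every ball not meeting a nonempty connected \<open>A\<close> is eventually released.
  With this trimming map, a realizer of \<open>ConC\<close> (or of its totalization) can be applied to any
  input, including the undefined point of the completion, and conversely the name of the
  trimmed set always lies in the domain of \<open>ConC\<close>; the remaining translations between names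
  are shifting by one and dropping zeros.
\<close>

section \<open>Total recursive functions\<close>

definition recursive :: "nat \<Rightarrow> (nat list \<Rightarrow> nat) \<Rightarrow> bool" where
  "recursive n f \<longleftrightarrow> (\<exists>F. partrec n F \<and> (\<forall>xs. length xs = n \<longrightarrow> F xs = Some (f xs)))"

lemma recursive_cong: "recursive n f \<Longrightarrow> (\<And>xs. length xs = n \<Longrightarrow> f xs = g xs) \<Longrightarrow> recursive n g"
  unfolding recursive_def by metis

lemma recursive_proj: "i < n \<Longrightarrow> recursive n (\<lambda>xs. xs ! i)"
  unfolding recursive_def by (rule exI[of _ "\<lambda>xs. Some (xs ! i)"]) (auto intro: pr_proj)

lemma recursive_zero: "recursive n (\<lambda>xs. 0)"
  unfolding recursive_def by (rule exI[of _ "\<lambda>xs. Some 0"]) (auto intro: pr_zero)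

lemma recursive_succ: "recursive 1 (\<lambda>xs. Suc (hd xs))"
  unfolding recursive_def using pr_succ by blast

lemma partrec_list_of_recursive:
  assumes "\<forall>g\<in>set gs. recursive n g"
  shows "\<exists>Gs. length Gs = length gs \<and> (\<forall>G\<in>set Gs. partrec n G) \<and>
     (\<forall>xs. length xs = n \<longrightarrow> map (\<lambda>G. G xs) Gs = map (\<lambda>g. Some (g xs)) gs)"
  using assms
proof (induction gs)
  case Nil then show ?case by auto
next
  case (Cons g gs)
  then obtain Gs where Gs: "length Gs = length gs" "\<forall>G\<in>set Gs. partrec n G"
     "\<forall>xs. length xs = n \<longrightarrow> map (\<lambda>G. G xs) Gs = map (\<lambda>g. Some (g xs)) gs" by auto
  from Cons.prems obtain G where G: "partrec n G" "\<forall>xs. length xs = n \<longrightarrow> G xs = Some (g xs)"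
    unfolding recursive_def by auto
  show ?case using Gs G by (intro exI[of _ "G # Gs"]) auto
qed

lemma recursive_comp:
  assumes "recursive m f" "length gs = m" "\<forall>g\<in>set gs. recursive n g"
  shows "recursive n (\<lambda>xs. f (map (\<lambda>g. g xs) gs))"
proof -
  obtain F where F: "partrec m F" "\<forall>xs. length xs = m \<longrightarrow> F xs = Some (f xs)"
    using assms(1) unfolding recursive_def by auto
  obtain Gs where Gs: "length Gs = length gs" "\<forall>G\<in>set Gs. partrec n G"
     "\<forall>xs. length xs = n \<longrightarrow> map (\<lambda>G. G xs) Gs = map (\<lambda>g. Some (g xs)) gs"
    using partrec_list_of_recursive[OF assms(3)] by auto
  have P: "partrec n (\<lambda>xs. if (\<forall>g\<in>set Gs. g xs \<noteq> None) then F (map (\<lambda>g. the (g xs)) Gs) else None)"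
    by (rule pr_comp) (use F Gs assms(2) in auto)
  show ?thesis unfolding recursive_def
  proof (intro exI conjI allI impI)
    fix xs :: "nat list" assume "length xs = n"
    then have e: "map (\<lambda>G. G xs) Gs = map (\<lambda>g. Some (g xs)) gs" using Gs(3) by auto
    have "\<forall>G\<in>set Gs. G xs \<noteq> None"
    proof
      fix G assume "G \<in> set Gs"
      then have "G xs \<in> set (map (\<lambda>G. G xs) Gs)" by auto
      then show "G xs \<noteq> None" unfolding e by auto
    qed
    moreover have "map (\<lambda>g. the (g xs)) Gs = map (\<lambda>g. g xs) gs"
      using arg_cong[OF e, of "map the"] by (simp add: comp_def)
    ultimately show "(if (\<forall>g\<in>set Gs. g xs \<noteq> None) then F (map (\<lambda>g. the (g xs)) Gs) else None)
        = Some (f (map (\<lambda>g. g xs) gs))"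
      using F(2) assms(2) by simp
  qed (rule P)
qed

lemma recursive_comp1: "recursive 1 f \<Longrightarrow> recursive n a \<Longrightarrow> recursive n (\<lambda>xs. f [a xs])"
  using recursive_comp[of 1 f "[a]" n] by simp

lemma recursive_comp2:
  "recursive 2 f \<Longrightarrow> recursive n a \<Longrightarrow> recursive n b \<Longrightarrow> recursive n (\<lambda>xs. f [a xs, b xs])"
  using recursive_comp[of 2 f "[a, b]" n] by simp

fun prim_rec :: "(nat list \<Rightarrow> nat) \<Rightarrow> (nat list \<Rightarrow> nat) \<Rightarrow> nat \<Rightarrow> nat list \<Rightarrow> nat" where
  "prim_rec f g 0 ys = f ys"
| "prim_rec f g (Suc k) ys = g (k # prim_rec f g k ys # ys)"

lemma recursive_prim_rec:
  assumes "recursive n f" "recursive (Suc (Suc n)) g"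
  shows "recursive (Suc n) (\<lambda>xs. prim_rec f g (hd xs) (tl xs))"
proof -
  obtain F where F: "partrec n F" "\<forall>xs. length xs = n \<longrightarrow> F xs = Some (f xs)"
    using assms(1) unfolding recursive_def by auto
  obtain G where G: "partrec (Suc (Suc n)) G" "\<forall>xs. length xs = Suc (Suc n) \<longrightarrow> G xs = Some (g xs)"
    using assms(2) unfolding recursive_def by auto
  have "length ys = n \<Longrightarrow> prec F G k ys = Some (prim_rec f g k ys)" for k ys
    by (induction k) (use F G in auto)
  then show ?thesis unfolding recursive_def
    by (intro exI[of _ "\<lambda>xs. prec F G (hd xs) (tl xs)"]) (use pr_prim[OF F(1) G(1)] in auto)
qed

lemma recursive_const: "recursive n (\<lambda>xs. k)"
proof (induction k)
  case 0 then show ?case by (rule recursive_zero)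
next
  case (Suc k)
  show ?case using recursive_comp1[OF recursive_succ Suc] by simp
qed

lemma recursive_add:
  assumes "recursive n a" "recursive n b" shows "recursive n (\<lambda>xs. a xs + b xs)"
proof -
  have A: "recursive 2 (\<lambda>xs. prim_rec (\<lambda>ys. ys ! 0) (\<lambda>ys. Suc (ys ! Suc 0)) (hd xs) (tl xs))"
    using recursive_prim_rec[of 1] recursive_proj recursive_comp1[OF recursive_succ, simplified]
    by (simp add: numeral_2_eq_2)
  have B: "prim_rec (\<lambda>ys. ys ! 0) (\<lambda>ys. Suc (ys ! Suc 0)) k ys = k + ys ! 0" for k ys
    by (induction k) auto
  have "recursive 2 (\<lambda>xs. xs ! 0 + xs ! Suc 0)"
    by (rule recursive_cong[OF A]) (auto simp: length_Suc_conv numeral_2_eq_2 B)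
  from recursive_comp2[OF this assms] show ?thesis by simp
qed

lemma recursive_Suc: "recursive n a \<Longrightarrow> recursive n (\<lambda>xs. Suc (a xs))"
  using recursive_comp1[OF recursive_succ] by simp

lemma recursive_sub:
  assumes "recursive n a" "recursive n b" shows "recursive n (\<lambda>xs. a xs - b xs)"
proof -
  have P: "recursive (Suc 0) (\<lambda>xs. prim_rec (\<lambda>ys. 0) (\<lambda>ys. ys ! 0) (hd xs) (tl xs))"
    by (rule recursive_prim_rec) (auto intro: recursive_proj recursive_zero)
  have Q: "prim_rec (\<lambda>ys. 0) (\<lambda>ys. ys ! 0) k ys = k - 1" for k ys
    by (induction k) auto
  have pred: "recursive 1 (\<lambda>xs. hd xs - 1)"
    by (rule recursive_cong[OF P[folded One_nat_def]]) (simp add: Q)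
  have A: "recursive 2 (\<lambda>xs. prim_rec (\<lambda>ys. ys ! 0) (\<lambda>ys. ys ! Suc 0 - 1) (hd xs) (tl xs))"
    using recursive_prim_rec[of 1] recursive_proj recursive_comp1[OF pred, simplified]
    by (simp add: numeral_2_eq_2)
  have B: "prim_rec (\<lambda>ys. ys ! 0) (\<lambda>ys. ys ! Suc 0 - 1) k ys = ys ! 0 - k" for k ys
    by (induction k) auto
  have "recursive 2 (\<lambda>xs. xs ! Suc 0 - xs ! 0)"
    by (rule recursive_cong[OF A]) (auto simp: length_Suc_conv numeral_2_eq_2 B[simplified])
  from recursive_comp2[OF this assms(2,1)] show ?thesis by simp
qed

lemma recursive_mult:
  assumes "recursive n a" "recursive n b" shows "recursive n (\<lambda>xs. a xs * b xs)"
proof -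
  have A: "recursive 2 (\<lambda>xs. prim_rec (\<lambda>ys. 0) (\<lambda>ys. ys ! Suc 0 + ys ! Suc (Suc 0)) (hd xs) (tl xs))"
    using recursive_prim_rec[of 1] recursive_zero recursive_add[OF recursive_proj recursive_proj]
    by (simp add: numeral_2_eq_2)
  have B: "prim_rec (\<lambda>ys. 0) (\<lambda>ys. ys ! Suc 0 + ys ! Suc (Suc 0)) k ys = k * ys ! 0" for k ys
    by (induction k) auto
  have "recursive 2 (\<lambda>xs. xs ! 0 * xs ! Suc 0)"
    by (rule recursive_cong[OF A]) (auto simp: length_Suc_conv numeral_2_eq_2 B)
  from recursive_comp2[OF this assms] show ?thesis by simp
qed

lemma recursive_triangle:
  assumes "recursive n a" shows "recursive n (\<lambda>xs. triangle (a xs))"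
proof -
  have A: "recursive (Suc 0) (\<lambda>xs. prim_rec (\<lambda>ys. 0) (\<lambda>ys. Suc (ys ! 0 + ys ! Suc 0)) (hd xs) (tl xs))"
    by (rule recursive_prim_rec)
      (auto intro!: recursive_zero recursive_Suc recursive_add recursive_proj)
  have B: "prim_rec (\<lambda>ys. 0) (\<lambda>ys. Suc (ys ! 0 + ys ! Suc 0)) k ys = triangle k" for k ys
    by (induction k) auto
  have "recursive 1 (\<lambda>xs. triangle (hd xs))"
    by (rule recursive_cong[OF A[folded One_nat_def]]) (simp add: B)
  from recursive_comp1[OF this assms] show ?thesis by simp
qed

lemma recursive_prod_encode:
  "recursive n a \<Longrightarrow> recursive n b \<Longrightarrow> recursive n (\<lambda>xs. prod_encode (a xs, b xs))"
  unfolding prod_encode_def by (simp add: recursive_add recursive_triangle)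


definition recfun :: "(nat \<Rightarrow> nat) \<Rightarrow> bool" where
  "recfun f \<longleftrightarrow> recursive 1 (\<lambda>xs. f (hd xs))"

definition decidable :: "(nat \<Rightarrow> bool) \<Rightarrow> bool" where
  "decidable P \<longleftrightarrow> recfun (\<lambda>z. if P z then 1 else 0)"

lemma recursive_recfun: "recfun f \<Longrightarrow> recursive n a \<Longrightarrow> recursive n (\<lambda>xs. f (a xs))"
  unfolding recfun_def using recursive_comp1[of "\<lambda>xs. f (hd xs)" n a] by simp

lemma recfun_comp: "recfun f \<Longrightarrow> recfun a \<Longrightarrow> recfun (\<lambda>z. f (a z))"
  unfolding recfun_def by (rule recursive_recfun[unfolded recfun_def])

lemma recfun_id: "recfun (\<lambda>z. z)"
  unfolding recfun_def by (rule recursive_cong[OF recursive_proj[of 0 1]]) (auto simp: length_Suc_conv)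

lemma recfun_const: "recfun (\<lambda>z. k)"
  unfolding recfun_def by (rule recursive_const)

lemma recfun_add: "recfun a \<Longrightarrow> recfun b \<Longrightarrow> recfun (\<lambda>z. a z + b z)"
  unfolding recfun_def by (rule recursive_add)

lemma recfun_sub: "recfun a \<Longrightarrow> recfun b \<Longrightarrow> recfun (\<lambda>z. a z - b z)"
  unfolding recfun_def by (rule recursive_sub)

lemma recfun_mult: "recfun a \<Longrightarrow> recfun b \<Longrightarrow> recfun (\<lambda>z. a z * b z)"
  unfolding recfun_def by (rule recursive_mult)

lemma recfun_Suc: "recfun a \<Longrightarrow> recfun (\<lambda>z. Suc (a z))"
  unfolding recfun_def by (rule recursive_Suc)

lemma recfun_triangle: "recfun a \<Longrightarrow> recfun (\<lambda>z. triangle (a z))"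
  unfolding recfun_def by (rule recursive_triangle)

lemma recfun_prod_encode: "recfun a \<Longrightarrow> recfun b \<Longrightarrow> recfun (\<lambda>z. prod_encode (a z, b z))"
  unfolding recfun_def by (rule recursive_prod_encode)

lemma decidable_less: "recfun a \<Longrightarrow> recfun b \<Longrightarrow> decidable (\<lambda>z. a z < b z)"
proof -
  assume "recfun a" "recfun b"
  then have "recfun (\<lambda>z. 1 - (1 - (b z - a z)))" by (intro recfun_sub recfun_const)
  moreover have "(1::nat) - (1 - (y - x)) = (if x < y then 1 else 0)" for x y :: nat by auto
  ultimately show ?thesis unfolding decidable_def by simp
qed

lemma recfun_if: "decidable P \<Longrightarrow> recfun a \<Longrightarrow> recfun b \<Longrightarrow> recfun (\<lambda>z. if P z then a z else b z)"
proof -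
  assume "decidable P" "recfun a" "recfun b"
  then have "recfun (\<lambda>z. (if P z then 1 else 0) * a z + (1 - (if P z then 1 else 0)) * b z)"
    unfolding decidable_def by (intro recfun_add recfun_mult recfun_sub recfun_const)
  moreover have "(\<lambda>z. (if P z then 1 else 0) * a z + (1 - (if P z then 1 else 0)) * b z)
      = (\<lambda>z. if P z then a z else b z)"
    by auto
  ultimately show ?thesis by simp
qed

lemma decidable_not: "decidable P \<Longrightarrow> decidable (\<lambda>z. \<not> P z)"
proof -
  assume "decidable P"
  then have "recfun (\<lambda>z. if P z then 0 else 1)" by (intro recfun_if recfun_const)
  moreover have "(\<lambda>z. if P z then 0 else 1) = (\<lambda>z. if \<not> P z then 1 else (0::nat))" by auto
  ultimately show ?thesis unfolding decidable_def by simp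
qed

lemma decidable_conj: "decidable P \<Longrightarrow> decidable Q \<Longrightarrow> decidable (\<lambda>z. P z \<and> Q z)"
proof -
  assume "decidable P" "decidable Q"
  then have "recfun (\<lambda>z. (if P z then 1 else 0) * (if Q z then 1 else 0))"
    unfolding decidable_def by (intro recfun_mult)
  moreover have "(\<lambda>z. (if P z then 1 else 0) * (if Q z then 1 else 0))
      = (\<lambda>z. if P z \<and> Q z then 1 else (0::nat))"
    by auto
  ultimately show ?thesis unfolding decidable_def by simp
qed

lemma decidable_disj: "decidable P \<Longrightarrow> decidable Q \<Longrightarrow> decidable (\<lambda>z. P z \<or> Q z)"
  using decidable_not[OF decidable_conj[OF decidable_not decidable_not]] by simp

lemma decidable_imp: "decidable P \<Longrightarrow> decidable Q \<Longrightarrow> decidable (\<lambda>z. P z \<longrightarrow> Q z)"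
  using decidable_disj[OF decidable_not] by simp

lemma decidable_le: "recfun a \<Longrightarrow> recfun b \<Longrightarrow> decidable (\<lambda>z. a z \<le> b z)"
  using decidable_not[OF decidable_less[of b a]] by (simp add: not_less)

lemma decidable_eq: "recfun a \<Longrightarrow> recfun b \<Longrightarrow> decidable (\<lambda>z. a z = b z)"
  using decidable_conj[OF decidable_le[of a b] decidable_le[of b a]] by (simp add: eq_iff)

text \<open>\<open>tri_root n\<close> is the largest \<open>s\<close> with \<open>triangle s \<le> n\<close>; it is what \<open>prod_decode\<close> searches for.\<close>

definition tri_root :: "nat \<Rightarrow> nat" where
  "tri_root n = (\<Sum>i<n. if triangle (Suc i) \<le> n then 1 else 0)"

lemma sum_indicator_lessThan: "m \<le> n \<Longrightarrow> (\<Sum>i<n. if i < m then 1 else 0) = (m::nat)"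
proof (induction n)
  case (Suc n)
  then show ?case by (cases "m = Suc n") (simp_all add: lessThan_Suc)
qed simp

lemma triangle_mono: "i \<le> j \<Longrightarrow> triangle i \<le> triangle j"
  by (induction j) (auto simp: le_Suc_eq)

lemma tri_root_bounds: "triangle (tri_root n) \<le> n \<and> n < triangle (Suc (tri_root n))"
proof -
  define m where "m = (LEAST i. n < triangle (Suc i))"
  have ex: "n < triangle (Suc n)" by simp
  have m1: "n < triangle (Suc m)" unfolding m_def by (rule LeastI[of _ n]) (rule ex)
  have m2: "i < m \<Longrightarrow> triangle (Suc i) \<le> n" for i
    unfolding m_def using not_less_Least by (metis not_less)
  have "m \<le> n" unfolding m_def by (rule Least_le) (rule ex)
  have "triangle (Suc i) \<le> n \<longleftrightarrow> i < m" for i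
    using m1 m2 triangle_mono[of "Suc m" "Suc i"] by (meson Suc_le_mono le_less_trans not_le)
  then have "tri_root n = (\<Sum>i<n. if i < m then 1 else 0)"
    unfolding tri_root_def by simp
  also have "\<dots> = m" by (rule sum_indicator_lessThan) fact
  finally have "tri_root n = m" .
  moreover have "triangle m \<le> n"
    using m2 by (cases m) auto
  ultimately show ?thesis using m1 by simp
qed

lemma prod_decode_tri_root:
  "prod_decode n = (n - triangle (tri_root n), tri_root n - (n - triangle (tri_root n)))"
proof -
  let ?s = "tri_root n"
  have a: "triangle ?s \<le> n" and b: "n < triangle (Suc ?s)" using tri_root_bounds[of n] by auto
  then have "prod_decode n = prod_decode_aux ?s (n - triangle ?s)"
    by (metis le_add_diff_inverse prod_decode_triangle_add)
  also have "\<dots> = (n - triangle ?s, ?s - (n - triangle ?s))"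
  proof -
    have "n - triangle ?s \<le> ?s" using a b by simp
    then show ?thesis by (subst prod_decode_aux.simps) simp
  qed
  finally show ?thesis .
qed

lemma recfun_tri_root: "recfun tri_root"
proof -
  \<comment> \<open>\<open>recfun_if\<close> needs pairing, so here the indicator is written with truncated subtraction\<close>
  have ind: "(1::nat) - (1 - (Suc n - t)) = (if t \<le> n then 1 else 0)" for n t :: nat
    by auto
  let ?g = "\<lambda>ys. ys ! Suc 0 + (1 - (1 - (Suc (ys ! Suc (Suc 0)) - triangle (Suc (ys ! 0)))))"
  have "recursive (Suc (Suc (Suc 0))) ?g"
    by (intro recursive_add recursive_sub recursive_Suc recursive_triangle recursive_proj recursive_const)
      auto
  then have "recursive 2 (\<lambda>xs. prim_rec (\<lambda>ys. 0) ?g (hd xs) (tl xs))"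
    using recursive_prim_rec[OF recursive_const, of 1 ?g] by (simp add: numeral_2_eq_2)
  from recursive_comp2[OF this recfun_id[unfolded recfun_def] recfun_id[unfolded recfun_def]]
  have "recursive 1 (\<lambda>xs. prim_rec (\<lambda>ys. 0) ?g (hd xs) [hd xs])" by simp
  moreover have "prim_rec (\<lambda>ys. 0) ?g k [x] = (\<Sum>i<k. if triangle (Suc i) \<le> x then 1 else 0)" for k x
    by (induction k) (auto simp: ind)
  ultimately show ?thesis unfolding recfun_def tri_root_def by simp
qed

lemma recfun_fst: "recfun a \<Longrightarrow> recfun (\<lambda>z. fst (prod_decode (a z)))"
  by (subst prod_decode_tri_root) (simp, intro recfun_sub recfun_triangle recfun_comp[OF recfun_tri_root])

lemma recfun_snd: "recfun a \<Longrightarrow> recfun (\<lambda>z. snd (prod_decode (a z)))"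
  by (subst prod_decode_tri_root) (simp, intro recfun_sub recfun_triangle recfun_comp[OF recfun_tri_root])

lemma recfun_comp2:
  "recfun (\<lambda>w. f (fst (prod_decode w)) (snd (prod_decode w))) \<Longrightarrow> recfun a \<Longrightarrow> recfun b \<Longrightarrow>
    recfun (\<lambda>z. f (a z) (b z))"
  using recfun_comp[of "\<lambda>w. f (fst (prod_decode w)) (snd (prod_decode w))" "\<lambda>z. prod_encode (a z, b z)"]
    recfun_prod_encode by simp

lemma decidable_comp2:
  "decidable (\<lambda>w. P (fst (prod_decode w)) (snd (prod_decode w))) \<Longrightarrow> recfun a \<Longrightarrow> recfun b \<Longrightarrow>
    decidable (\<lambda>z. P (a z) (b z))"
  unfolding decidable_def by (rule recfun_comp2[where f="\<lambda>x y. if P x y then 1 else 0", simplified])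

fun prim_rec_param :: "(nat \<Rightarrow> nat) \<Rightarrow> (nat \<Rightarrow> nat \<Rightarrow> nat \<Rightarrow> nat) \<Rightarrow> nat \<Rightarrow> nat \<Rightarrow> nat" where
  "prim_rec_param i s 0 x = i x"
| "prim_rec_param i s (Suc k) x = s k (prim_rec_param i s k x) x"

lemma recfun_prim_rec_param:
  assumes i: "recfun i"
    and s: "recfun (\<lambda>w. s (fst (prod_decode w)) (fst (prod_decode (snd (prod_decode w))))
                 (snd (prod_decode (snd (prod_decode w)))))"
    and c: "recfun c"
  shows "recfun (\<lambda>x. prim_rec_param i s (c x) x)"
proof -
  let ?g = "\<lambda>ys. s (ys ! 0) (ys ! Suc 0) (ys ! Suc (Suc 0))"
  have "recursive 3 (\<lambda>ys. prod_encode (ys ! 0, prod_encode (ys ! Suc 0, ys ! Suc (Suc 0))))"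
    by (intro recursive_prod_encode recursive_proj) auto
  from recursive_recfun[OF s this] have "recursive (Suc (Suc (Suc 0))) ?g"
    by (simp add: numeral_3_eq_3)
  then have "recursive 2 (\<lambda>xs. prim_rec (\<lambda>ys. i (hd ys)) ?g (hd xs) (tl xs))"
    using recursive_prim_rec[of 1 "\<lambda>ys. i (hd ys)" ?g] i by (simp add: recfun_def numeral_2_eq_2)
  from recursive_comp2[OF this c[unfolded recfun_def] recfun_id[unfolded recfun_def]]
  have "recursive 1 (\<lambda>xs. prim_rec (\<lambda>ys. i (hd ys)) ?g (c (hd xs)) [hd xs])" by simp
  moreover have "prim_rec (\<lambda>ys. i (hd ys)) ?g k [x] = prim_rec_param i s k x" for k x
    by (induction k) auto
  ultimately show ?thesis unfolding recfun_def by simp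
qed

lemma recfun_sum:
  assumes "recfun (\<lambda>w. f (fst (prod_decode w)) (snd (prod_decode w)))" "recfun b"
  shows "recfun (\<lambda>x. \<Sum>i<b x. f i x)"
proof -
  have "recfun (\<lambda>x. prim_rec_param (\<lambda>x. 0) (\<lambda>k r x. r + f k x) (b x) x)"
    by (intro recfun_prim_rec_param recfun_const assms(2) recfun_add recfun_fst recfun_snd recfun_id
        recfun_comp2[OF assms(1)])
  moreover have "prim_rec_param (\<lambda>x. 0) (\<lambda>k r x. r + f k x) n x = (\<Sum>i<n. f i x)" for n x
    by (induction n) auto
  ultimately show ?thesis by simp
qed

lemma decidable_all:
  assumes "decidable (\<lambda>w. P (fst (prod_decode w)) (snd (prod_decode w)))" "recfun b"
  shows "decidable (\<lambda>x. \<forall>i<b x. P i x)"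
proof -
  have "recfun (\<lambda>x. prim_rec_param (\<lambda>x. 1) (\<lambda>k r x. if P k x then r else 0) (b x) x)"
    by (intro recfun_prim_rec_param recfun_const assms(2) recfun_if recfun_fst recfun_snd recfun_id
        decidable_comp2[OF assms(1)])
  moreover have "prim_rec_param (\<lambda>x. 1) (\<lambda>k r x. if P k x then r else 0) n x
      = (if \<forall>i<n. P i x then 1 else 0)" for n x
    by (induction n) (auto simp: less_Suc_eq)
  ultimately show ?thesis unfolding decidable_def by simp
qed

lemma decidable_ex:
  assumes "decidable (\<lambda>w. P (fst (prod_decode w)) (snd (prod_decode w)))" "recfun b"
  shows "decidable (\<lambda>x. \<exists>i<b x. P i x)"
  using decidable_not[OF decidable_all[OF decidable_not[OF assms(1)] assms(2)]] by simp

lemma recfun_mod2: "recfun a \<Longrightarrow> recfun (\<lambda>z. a z mod 2)"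
proof -
  assume "recfun a"
  then have "recfun (\<lambda>x. prim_rec_param (\<lambda>x. 0) (\<lambda>k r x. 1 - r) (a x) x)"
    by (intro recfun_prim_rec_param recfun_const recfun_sub recfun_fst recfun_snd recfun_id)
  moreover have "prim_rec_param (\<lambda>x. 0) (\<lambda>k r x. 1 - r) n x = n mod 2" for n x
    by (induction n) (auto simp: mod_Suc)
  ultimately show ?thesis by simp
qed

lemma recfun_div2: "recfun a \<Longrightarrow> recfun (\<lambda>z. a z div 2)"
proof -
  assume "recfun a"
  then have "recfun (\<lambda>x. prim_rec_param (\<lambda>x. 0) (\<lambda>k r x. r + k mod 2) (a x) x)"
    by (intro recfun_prim_rec_param recfun_const recfun_add recfun_mod2 recfun_fst recfun_snd recfun_id)
  moreover have "prim_rec_param (\<lambda>x. 0) (\<lambda>k r x. r + k mod 2) n x = n div 2" for n x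
    by (induction n) (auto simp: div2_Suc_Suc, presburger)
  ultimately show ?thesis by simp
qed

definition code_tl :: "nat \<Rightarrow> nat" where
  "code_tl c = snd (prod_decode (c - 1))"

definition code_drop :: "nat \<Rightarrow> nat \<Rightarrow> nat" where
  "code_drop k c = (code_tl ^^ k) c"

text \<open>Agrees with \<open>list_decode c ! j\<close> for \<open>j < length (list_decode c)\<close>; iterating tails makes it
  recursive in \<open>c\<close> and \<open>j\<close> without a bound on \<open>j\<close>.\<close>

definition code_nth :: "nat \<Rightarrow> nat \<Rightarrow> nat" where
  "code_nth c j = fst (prod_decode (code_drop j c - 1))"

lemma prod_decode_0: "prod_decode 0 = (0, 0)"
  using prod_encode_inverse[of "(0, 0)"] by (simp add: prod_encode_def)

lemma code_drop_list_encode: "code_drop k (list_encode xs) = list_encode (drop k xs)"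
proof (induction k arbitrary: xs)
  case 0 then show ?case by (simp add: code_drop_def)
next
  case (Suc k)
  have "code_drop (Suc k) (list_encode xs) = code_drop k (code_tl (list_encode xs))"
    unfolding code_drop_def by (simp add: funpow_Suc_right del: funpow.simps)
  also have "code_tl (list_encode xs) = list_encode (tl xs)"
    by (cases xs) (auto simp: code_tl_def prod_decode_0)
  finally show ?case using Suc by (simp add: drop_Suc)
qed

lemma length_le_list_encode: "length xs \<le> list_encode xs"
  by (induction xs) (auto intro: le_trans[OF _ le_prod_encode_2])

lemma length_list_decode_eq_sum: "length (list_decode c) = (\<Sum>k<c. if 0 < code_drop k c then 1 else 0)"
proof -
  obtain xs where c: "c = list_encode xs" by (metis list_decode_inverse)
  have "0 < list_encode ys \<longleftrightarrow> ys \<noteq> []" for ys :: "nat list"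
    by (cases ys) auto
  then have "0 < list_encode (drop k xs) \<longleftrightarrow> k < length xs" for k
    by (simp add: drop_eq_Nil not_le)
  then have "(\<Sum>k<c. if 0 < code_drop k c then 1 else 0) = (\<Sum>k<c. if k < length xs then 1 else 0)"
    unfolding c by (simp add: code_drop_list_encode)
  also have "\<dots> = length xs"
    using sum_indicator_lessThan[OF length_le_list_encode] unfolding c .
  finally show ?thesis unfolding c by simp
qed

lemma code_nth_list_encode: "j < length xs \<Longrightarrow> code_nth (list_encode xs) j = xs ! j"
  by (simp add: code_nth_def code_drop_list_encode Cons_nth_drop_Suc[symmetric])

lemma length_list_decode_prefix_code: "length (list_decode (prefix_code p k)) = k"
  unfolding prefix_code_def by simp

lemma code_nth_prefix_code: "j < k \<Longrightarrow> code_nth (prefix_code p k) j = p j"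
  unfolding prefix_code_def by (simp add: code_nth_list_encode)

lemma recfun_code_drop:
  assumes "recfun a" "recfun b" shows "recfun (\<lambda>z. code_drop (a z) (b z))"
proof -
  have "recfun (\<lambda>w. prim_rec_param (\<lambda>w. snd (prod_decode w)) (\<lambda>k r x. code_tl r) (fst (prod_decode w)) w)"
    unfolding code_tl_def
    by (intro recfun_prim_rec_param recfun_snd recfun_fst recfun_sub recfun_const recfun_id)
  moreover have "prim_rec_param (\<lambda>w. snd (prod_decode w)) (\<lambda>k r x. code_tl r) n w
      = code_drop n (snd (prod_decode w))" for n w
    by (induction n) (auto simp: code_drop_def)
  ultimately show ?thesis
    using recfun_comp2[of code_drop, OF _ assms] by simp
qed

lemma recfun_code_nth: "recfun a \<Longrightarrow> recfun b \<Longrightarrow> recfun (\<lambda>z. code_nth (a z) (b z))"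
  unfolding code_nth_def by (intro recfun_fst recfun_sub recfun_code_drop recfun_const)

lemma recfun_length_list_decode:
  assumes a: "recfun a" shows "recfun (\<lambda>z. length (list_decode (a z)))"
  unfolding length_list_decode_eq_sum
  by (intro recfun_sum recfun_if decidable_less recfun_code_drop recfun_fst recfun_snd recfun_const
      recfun_id recfun_comp[OF a] a)


definition int_pos :: "nat \<Rightarrow> nat" where
  "int_pos a = (if a mod 2 = 0 then a div 2 else 0)"

definition int_neg :: "nat \<Rightarrow> nat" where
  "int_neg a = (if a mod 2 = 0 then 0 else a div 2 + 1)"

lemma int_decode_eq_pos_neg: "int_decode a = int (int_pos a) - int (int_neg a)"
  by (simp add: int_decode_def sum_decode_def int_pos_def int_neg_def even_iff_mod_2_eq_zero)

text \<open>The lower (\<open>s = 0\<close>) or upper (\<open>s \<noteq> 0\<close>) endpoint of \<open>rball k\<close>, as a fraction with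
  natural numerator parts, so that comparing endpoints becomes a decidable relation on codes.\<close>

definition ball_end :: "nat \<Rightarrow> nat \<Rightarrow> real" where
  "ball_end k s = qnum (fst (prod_decode k))
     + (if s = 0 then - qnum (snd (prod_decode k)) else qnum (snd (prod_decode k)))"

definition end_num_pos :: "nat \<Rightarrow> nat \<Rightarrow> nat" where
  "end_num_pos k s =
     int_pos (fst (prod_decode (fst (prod_decode k)))) * Suc (snd (prod_decode (snd (prod_decode k))))
     + (if s = 0 then int_neg (fst (prod_decode (snd (prod_decode k))))
        else int_pos (fst (prod_decode (snd (prod_decode k))))) * Suc (snd (prod_decode (fst (prod_decode k))))"

definition end_num_neg :: "nat \<Rightarrow> nat \<Rightarrow> nat" where
  "end_num_neg k s =
     int_neg (fst (prod_decode (fst (prod_decode k)))) * Suc (snd (prod_decode (snd (prod_decode k))))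
     + (if s = 0 then int_pos (fst (prod_decode (snd (prod_decode k))))
        else int_neg (fst (prod_decode (snd (prod_decode k))))) * Suc (snd (prod_decode (fst (prod_decode k))))"

definition end_denom :: "nat \<Rightarrow> nat" where
  "end_denom k = Suc (snd (prod_decode (fst (prod_decode k)))) * Suc (snd (prod_decode (snd (prod_decode k))))"

definition end_less :: "nat \<Rightarrow> nat \<Rightarrow> nat \<Rightarrow> nat \<Rightarrow> bool" where
  "end_less k1 s1 k2 s2 \<longleftrightarrow>
     end_num_pos k1 s1 * end_denom k2 + end_num_neg k2 s2 * end_denom k1
     < end_num_pos k2 s2 * end_denom k1 + end_num_neg k1 s1 * end_denom k2"

lemma ball_end_eq_fraction:
  "ball_end k s = (real (end_num_pos k s) - real (end_num_neg k s)) / real (end_denom k)"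
proof -
  obtain u v where k: "prod_decode k = (u, v)" by fastforce
  obtain a b where u: "prod_decode u = (a, b)" by fastforce
  obtain c d where v: "prod_decode v = (c, d)" by fastforce
  have q1: "qnum u = (real (int_pos a) - real (int_neg a)) / real (Suc b)"
    unfolding qnum_def using u by (simp add: int_decode_eq_pos_neg)
  have q2: "qnum v = (real (int_pos c) - real (int_neg c)) / real (Suc d)"
    unfolding qnum_def using v by (simp add: int_decode_eq_pos_neg)
  show ?thesis
    unfolding ball_end_def end_num_pos_def end_num_neg_def end_denom_def k u v fst_conv snd_conv q1 q2
    by (cases "s = 0") (simp_all add: field_simps)
qed

lemma end_less_iff: "end_less k1 s1 k2 s2 \<longleftrightarrow> ball_end k1 s1 < ball_end k2 s2"
proof -
  have "end_denom k1 > 0" "end_denom k2 > 0" by (simp_all add: end_denom_def)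
  then have d1: "real (end_denom k1) > 0" and d2: "real (end_denom k2) > 0" by simp_all
  have "ball_end k1 s1 < ball_end k2 s2 \<longleftrightarrow>
     (real (end_num_pos k1 s1) - real (end_num_neg k1 s1)) * real (end_denom k2)
     < (real (end_num_pos k2 s2) - real (end_num_neg k2 s2)) * real (end_denom k1)"
    unfolding ball_end_eq_fraction using d1 d2 by (simp add: divide_less_eq less_divide_eq)
  also have "\<dots> \<longleftrightarrow> real (end_num_pos k1 s1 * end_denom k2 + end_num_neg k2 s2 * end_denom k1)
      < real (end_num_pos k2 s2 * end_denom k1 + end_num_neg k1 s1 * end_denom k2)"
    by (simp add: algebra_simps)
  finally show ?thesis unfolding end_less_def by linarith
qed

lemma rball_eq_ball_ends: "rball k = {ball_end k 0<..<ball_end k 1}"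
  unfolding rball_def ball_end_def by (auto simp: ball_def dist_real_def abs_less_iff)

text \<open>Codes of the points \<open>0\<close> and \<open>1\<close>: the balls \<open>0\<close> and \<open>20\<close> have radius \<open>0\<close> and centres \<open>0\<close>, \<open>1\<close>.\<close>

lemma ball_end_0: "ball_end 0 1 = 0"
  unfolding ball_end_def by (simp add: prod_decode_0 qnum_def int_decode_def sum_decode_def)

lemma ball_end_20: "ball_end 20 1 = 1"
proof -
  have "prod_encode (5, 0) = 20" "prod_encode (2, 0) = 5"
    by (simp_all add: prod_encode_def triangle_def)
  then have "prod_decode 20 = (5, 0)" "prod_decode 5 = (2, 0)"
    by (metis prod_encode_inverse)+
  then show ?thesis
    unfolding ball_end_def by (simp add: qnum_def prod_decode_0 int_decode_def sum_decode_def)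
qed

lemma rball_0: "rball 0 = {}"
  unfolding rball_def by (simp add: prod_decode_0 qnum_def int_decode_def sum_decode_def)

lemma recfun_int_pos: "recfun a \<Longrightarrow> recfun (\<lambda>z. int_pos (a z))"
  unfolding int_pos_def by (intro recfun_if decidable_eq recfun_mod2 recfun_div2 recfun_const)

lemma recfun_int_neg: "recfun a \<Longrightarrow> recfun (\<lambda>z. int_neg (a z))"
  unfolding int_neg_def by (intro recfun_if decidable_eq recfun_mod2 recfun_div2 recfun_const recfun_add)

lemma decidable_end_less:
  "recfun a \<Longrightarrow> recfun b \<Longrightarrow> recfun c \<Longrightarrow> recfun d \<Longrightarrow> decidable (\<lambda>z. end_less (a z) (b z) (c z) (d z))"
  unfolding end_less_def end_num_pos_def end_num_neg_def end_denom_def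
  by (intro decidable_less recfun_add recfun_mult recfun_if decidable_eq recfun_int_pos recfun_int_neg
      recfun_Suc recfun_fst recfun_snd recfun_const)

lemma left_boundary_is_right_end:
  fixes lo hi :: "nat \<Rightarrow> real" and t :: nat
  defines "U \<equiv> (\<Union>i<t. {lo i<..<hi i})"
  assumes "0 < m" "m \<notin> U" "{0..<m} \<subseteq> U"
  shows "\<exists>i<t. hi i = m"
proof (rule ccontr)
  assume none: "\<not> (\<exists>i<t. hi i = m)"
  define a where "a = Max (insert 0 {hi i |i. i < t \<and> hi i < m})"
  have fin: "finite (insert 0 {hi i |i. i < t \<and> hi i < m})" by auto
  have "a < m" unfolding a_def using fin assms(2) by (subst Max_less_iff) auto
  have hi_le_a: "hi i \<le> a" if "i < t" "hi i < m" for i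
    unfolding a_def using fin that by (intro Max_ge) auto
  have "0 \<le> a" unfolding a_def using fin by (intro Max_ge) auto
  define y where "y = (a + m) / 2"
  have y: "a < y" "y < m" using \<open>a < m\<close> unfolding y_def by auto
  then have "y \<in> U" using assms(4) \<open>0 \<le> a\<close> by auto
  then obtain i where i: "i < t" "lo i < y" "y < hi i" unfolding U_def by auto
  show False
  proof (cases "hi i < m")
    case True then show ?thesis using hi_le_a[OF i(1)] i y by auto
  next
    case False
    then have "m < hi i" using none i(1) by force
    then have "m \<in> U" unfolding U_def using i y by fastforce
    then show ?thesis using assms(3) by simp
  qed
qed

lemma cover_from_zero_iff:
  fixes lo hi :: "nat \<Rightarrow> real" and t :: nat
  defines "U \<equiv> (\<Union>i<t. {lo i<..<hi i})"
  shows "{0..<h} \<subseteq> U \<longleftrightarrow> (0 < h \<longrightarrow> 0 \<in> U) \<and> (\<forall>i<t. 0 \<le> hi i \<and> hi i < h \<longrightarrow> hi i \<in> U)"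
proof (intro iffI)
  assume cond: "(0 < h \<longrightarrow> 0 \<in> U) \<and> (\<forall>i<t. 0 \<le> hi i \<and> hi i < h \<longrightarrow> hi i \<in> U)"
  show "{0..<h} \<subseteq> U"
  proof (rule ccontr)
    assume "\<not> {0..<h} \<subseteq> U"
    then obtain z where z: "0 \<le> z" "z < h" "z \<notin> U" by (auto simp: subset_eq)
    define S where "S = {0..z} - U"
    have "S \<noteq> {}" "bdd_below S" using z unfolding S_def by (auto intro: bdd_belowI[of _ 0])
    moreover have "closed S" unfolding S_def U_def by (intro closed_Diff) auto
    ultimately have "Inf S \<in> S" by (rule closed_contains_Inf)
    then have m: "0 \<le> Inf S" "Inf S \<le> z" "Inf S \<notin> U" unfolding S_def by auto
    have below: "{0..<Inf S} \<subseteq> U"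
    proof
      fix y assume y: "y \<in> {0..<Inf S}"
      show "y \<in> U"
      proof (rule ccontr)
        assume "y \<notin> U"
        then have "y \<in> S" using y m unfolding S_def by auto
        then show False using cInf_lower[OF _ \<open>bdd_below S\<close>] y by fastforce
      qed
    qed
    show False
    proof (cases "Inf S = 0")
      case True then show ?thesis using cond z m by auto
    next
      case False
      with m below obtain i where "i < t" "hi i = Inf S"
        using left_boundary_is_right_end[where m="Inf S" and t=t and lo=lo and hi=hi] unfolding U_def by auto
      then show ?thesis using cond m z by auto
    qed
  qed
qed auto

lemma cover_to_one_iff:
  fixes lo hi :: "nat \<Rightarrow> real" and t :: nat
  defines "U \<equiv> (\<Union>i<t. {lo i<..<hi i})"
  shows "{l<..1} \<subseteq> U \<longleftrightarrow> (l < 1 \<longrightarrow> 1 \<in> U) \<and> (\<forall>i<t. l < lo i \<and> lo i \<le> 1 \<longrightarrow> lo i \<in> U)"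
proof -
  define U' where "U' = (\<Union>i<t. {1 - hi i<..<1 - lo i})"
  have mem: "x \<in> U \<longleftrightarrow> 1 - x \<in> U'" for x unfolding U_def U'_def by auto
  have "{l<..1} \<subseteq> U \<longleftrightarrow> {0..<1 - l} \<subseteq> U'"
  proof
    assume cov: "{l<..1} \<subseteq> U"
    show "{0..<1 - l} \<subseteq> U'"
    proof
      fix x assume "x \<in> {0..<1 - l}"
      then have "1 - x \<in> U" using cov by auto
      then show "x \<in> U'" using mem[of "1 - x"] by simp
    qed
  next
    assume cov: "{0..<1 - l} \<subseteq> U'"
    show "{l<..1} \<subseteq> U"
    proof
      fix x assume "x \<in> {l<..1}"
      then have "1 - x \<in> U'" using cov by auto
      then show "x \<in> U" using mem by simp
    qed
  qed
  also have "\<dots> \<longleftrightarrow> (0 < 1 - l \<longrightarrow> 0 \<in> U') \<and> (\<forall>i<t. 0 \<le> 1 - lo i \<and> 1 - lo i < 1 - l \<longrightarrow> 1 - lo i \<in> U')"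
    unfolding U'_def by (rule cover_from_zero_iff)
  also have "\<dots> \<longleftrightarrow> (l < 1 \<longrightarrow> 1 \<in> U) \<and> (\<forall>i<t. l < lo i \<and> lo i \<le> 1 \<longrightarrow> lo i \<in> U)"
    using mem by auto
  finally show ?thesis .
qed

section \<open>Trimming an enumeration of rational balls\<close>

definition covered :: "(nat \<Rightarrow> nat) \<Rightarrow> nat \<Rightarrow> real set" where
  "covered e t = (\<Union>j<t. rball (e j))"

definition discards :: "(nat \<Rightarrow> nat) \<Rightarrow> nat \<Rightarrow> nat \<Rightarrow> bool" where
  "discards e t j \<longleftrightarrow> \<not> {0..1} \<subseteq> covered e t \<and> j < t \<and>
     ({0..<ball_end (e j) 1} \<subseteq> covered e t \<or> {ball_end (e j) 0<..1} \<subseteq> covered e t)"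

definition trimmed :: "(nat \<Rightarrow> nat) \<Rightarrow> real set" where
  "trimmed e = {0..1} - (\<Union>(t, j) \<in> {(t, j). discards e t j}. rball (e j))"

lemma mem_trimmed_iff: "x \<in> trimmed e \<longleftrightarrow> x \<in> {0..1} \<and> (\<forall>t j. discards e t j \<longrightarrow> x \<notin> rball (e j))"
  unfolding trimmed_def by auto

lemma covered_mono: "t \<le> t' \<Longrightarrow> covered e t \<subseteq> covered e t'"
  unfolding covered_def by (rule UN_mono) auto

lemma mem_covered_iff: "x \<in> covered e t \<longleftrightarrow> (\<exists>j<t. ball_end (e j) 0 < x \<and> x < ball_end (e j) 1)"
  unfolding covered_def rball_eq_ball_ends by auto

lemma discards_subset_covered: "discards e t j \<Longrightarrow> rball (e j) \<subseteq> covered e t"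
  unfolding discards_def covered_def by auto

lemma cover_below_extend:
  assumes "{0..<a} \<subseteq> covered e t" "j < t" "ball_end (e j) 0 < a"
  shows "{0..<ball_end (e j) 1} \<subseteq> covered e t"
proof
  fix w assume w: "w \<in> {0..<ball_end (e j) 1}"
  show "w \<in> covered e t"
  proof (cases "w < a")
    case True then show ?thesis using assms(1) w by auto
  next
    case False then show ?thesis using assms(2,3) w unfolding mem_covered_iff by auto
  qed
qed

lemma cover_above_extend:
  assumes "{a<..1} \<subseteq> covered e t" "j < t" "a < ball_end (e j) 1"
  shows "{ball_end (e j) 0<..1} \<subseteq> covered e t"
proof
  fix w assume w: "w \<in> {ball_end (e j) 0<..1}"
  show "w \<in> covered e t"
  proof (cases "a < w")
    case True then show ?thesis using assms(1) w by auto
  next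
    case False then show ?thesis using assms(2,3) w unfolding mem_covered_iff by auto
  qed
qed

lemma finite_cover:
  assumes "compact K" "K \<subseteq> (\<Union>j. rball (e j))"
  shows "\<exists>t. K \<subseteq> covered e t"
proof -
  obtain C where "C \<subseteq> UNIV" "finite C" and K: "K \<subseteq> (\<Union>j\<in>C. rball (e j))"
    by (rule compactE_image[OF assms(1) _ assms(2)]) (simp add: rball_def)
  define t where "t = Suc (Max (insert 0 C))"
  have "C \<subseteq> {..<t}" using \<open>finite C\<close> by (auto simp: t_def le_imp_less_Suc)
  then have "(\<Union>j\<in>C. rball (e j)) \<subseteq> covered e t" unfolding covered_def by (rule UN_mono) simp
  then show ?thesis using K by blast
qed

lemma closed_trimmed: "closed (trimmed e)"
  unfolding trimmed_def rball_def by (intro closed_Diff open_UN) auto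

text \<open>Discarded balls eat into \<open>[0,1]\<close> only from its ends.\<close>

lemma connected_trimmed: "connected (trimmed e)"
  unfolding connected_iff_interval
proof (intro ballI allI impI)
  fix x z y assume x: "x \<in> trimmed e" and z: "z \<in> trimmed e" and "x \<le> y" "y \<le> z"
  show "y \<in> trimmed e"
  proof (rule ccontr)
    assume "y \<notin> trimmed e"
    moreover have "y \<in> {0..1}" using x z \<open>x \<le> y\<close> \<open>y \<le> z\<close> by (auto simp: mem_trimmed_iff)
    ultimately obtain t j where "discards e t j" and y: "y \<in> rball (e j)"
      by (auto simp: mem_trimmed_iff)
    then have miss: "\<not> {0..1} \<subseteq> covered e t"
      and cover: "{0..<ball_end (e j) 1} \<subseteq> covered e t \<or> {ball_end (e j) 0<..1} \<subseteq> covered e t"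
      unfolding discards_def by auto
    from y have y': "ball_end (e j) 0 < y" "y < ball_end (e j) 1" by (auto simp: rball_eq_ball_ends)
    from cover show False
    proof
      assume L: "{0..<ball_end (e j) 1} \<subseteq> covered e t"
      have "x \<in> covered e t" using L x \<open>x \<le> y\<close> y' by (auto simp: mem_trimmed_iff)
      then obtain i where "i < t" and xi: "x \<in> rball (e i)" unfolding covered_def by auto
      then have "{0..<ball_end (e i) 1} \<subseteq> covered e t"
        using \<open>x \<le> y\<close> y' by (intro cover_below_extend[OF L]) (auto simp: rball_eq_ball_ends)
      then have "discards e t i" using miss \<open>i < t\<close> by (auto simp: discards_def)
      then show False using x xi by (auto simp: mem_trimmed_iff)
    next
      assume R: "{ball_end (e j) 0<..1} \<subseteq> covered e t"
      have "z \<in> covered e t" using R z \<open>y \<le> z\<close> y' by (auto simp: mem_trimmed_iff)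
      then obtain i where "i < t" and zi: "z \<in> rball (e i)" unfolding covered_def by auto
      then have "{ball_end (e i) 0<..1} \<subseteq> covered e t"
        using \<open>y \<le> z\<close> y' by (intro cover_above_extend[OF R]) (auto simp: rball_eq_ball_ends)
      then have "discards e t i" using miss \<open>i < t\<close> by (auto simp: discards_def)
      then show False using z zi by (auto simp: mem_trimmed_iff)
    qed
  qed
qed

text \<open>Every discarded ball lies within the last stage whose balls do not yet cover \<open>[0,1]\<close>;
  if there is no such last stage, compactness leaves a point of \<open>[0,1]\<close> outside all balls.\<close>

lemma trimmed_nonempty: "trimmed e \<noteq> {}"
proof (cases "\<exists>t. {0..1} \<subseteq> covered e t")
  case True
  then obtain t0 where t0: "{0..1} \<subseteq> covered e t0" by blast
  define V where "V = {t. \<not> {0..1} \<subseteq> covered e t}"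
  have "V \<subseteq> {..<t0}"
    using t0 covered_mono[of t0 _ e] unfolding V_def by (force simp: not_less)
  then have fin: "finite V" by (rule finite_subset) simp
  have "0 \<in> V" unfolding V_def covered_def by simp
  then have "Max V \<in> V" using fin by (intro Max_in) auto
  then have "\<not> {0..1} \<subseteq> covered e (Max V)" unfolding V_def by simp
  then obtain x where x: "x \<in> {0..1}" "x \<notin> covered e (Max V)" by blast
  have "x \<notin> rball (e j)" if "discards e t j" for t j
  proof -
    have "t \<in> V" using that unfolding discards_def V_def by auto
    then have "covered e t \<subseteq> covered e (Max V)" using fin by (intro covered_mono Max_ge)
    then show ?thesis using discards_subset_covered[OF that] x(2) by blast
  qed
  then have "x \<in> trimmed e" using x(1) by (simp add: mem_trimmed_iff)
  then show ?thesis by blast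
next
  case False
  then have "\<not> {0..1} \<subseteq> (\<Union>j. rball (e j))" using finite_cover[of "{0..1::real}" e] by auto
  then obtain x where "x \<in> {0..1}" "\<And>j. x \<notin> rball (e j)" by blast
  then have "x \<in> trimmed e" by (simp add: mem_trimmed_iff)
  then show ?thesis by blast
qed

lemma trimmed_eq:
  assumes A: "A = {0..1} - (\<Union>j. rball (e j))" and "A \<noteq> {}" "connected A"
  shows "trimmed e = A"
proof
  show "A \<subseteq> trimmed e" unfolding A by (auto simp: mem_trimmed_iff)
next
  obtain a where a: "a \<in> A" using \<open>A \<noteq> {}\<close> by auto
  then have miss: "\<not> {0..1} \<subseteq> covered e t" for t unfolding A covered_def by auto
  show "trimmed e \<subseteq> A"
  proof
    fix x assume x: "x \<in> trimmed e"
    show "x \<in> A"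
    proof (rule ccontr)
      assume "x \<notin> A"
      then obtain j where j: "x \<in> rball (e j)" using x unfolding A by (auto simp: mem_trimmed_iff)
      then have j': "ball_end (e j) 0 < x" "x < ball_end (e j) 1" by (auto simp: rball_eq_ball_ends)
      have "x \<noteq> a" using \<open>x \<notin> A\<close> a by auto
      then consider "x < a" | "a < x" by linarith
      then show False
      proof cases
        case 1
        have "y \<notin> A" if "y \<in> {0..x}" for y
          using connectedD_interval[OF \<open>connected A\<close> _ a, of y x] that 1 \<open>x \<notin> A\<close> by auto
        then have "{0..x} \<subseteq> (\<Union>j. rball (e j))" using x unfolding A by (auto simp: mem_trimmed_iff)
        then obtain t where t: "{0..x} \<subseteq> covered e t" using finite_cover[of "{0..x}" e] by auto
        define t' where "t' = max t (Suc j)"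
        have "{0..<x} \<subseteq> {0..x}" by auto
        also note t
        also have "covered e t \<subseteq> covered e t'" by (rule covered_mono) (simp add: t'_def)
        finally have "{0..<x} \<subseteq> covered e t'" .
        then have "{0..<ball_end (e j) 1} \<subseteq> covered e t'"
          using j' by (intro cover_below_extend) (auto simp: t'_def)
        then have "discards e t' j" using miss by (auto simp: discards_def t'_def)
        then show False using x j by (auto simp: mem_trimmed_iff)
      next
        case 2
        have "y \<notin> A" if "y \<in> {x..1}" for y
          using connectedD_interval[OF \<open>connected A\<close> a, of y x] that 2 \<open>x \<notin> A\<close> by auto
        then have "{x..1} \<subseteq> (\<Union>j. rball (e j))" using x unfolding A by (auto simp: mem_trimmed_iff)
        then obtain t where t: "{x..1} \<subseteq> covered e t" using finite_cover[of "{x..1}" e] by auto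
        define t' where "t' = max t (Suc j)"
        have "{x<..1} \<subseteq> {x..1}" by auto
        also note t
        also have "covered e t \<subseteq> covered e t'" by (rule covered_mono) (simp add: t'_def)
        finally have "{x<..1} \<subseteq> covered e t'" .
        then have "{ball_end (e j) 0<..1} \<subseteq> covered e t'"
          using j' by (intro cover_above_extend) (auto simp: t'_def)
        then have "discards e t' j" using miss by (auto simp: discards_def t'_def)
        then show False using x j by (auto simp: mem_trimmed_iff)
      qed
    qed
  qed
qed

definition end_covered :: "(nat \<Rightarrow> nat) \<Rightarrow> nat \<Rightarrow> nat \<Rightarrow> nat \<Rightarrow> bool" where
  "end_covered e t k s \<longleftrightarrow> (\<exists>j<t. end_less (e j) 0 k s \<and> end_less k s (e j) 1)"

definition covers_below :: "(nat \<Rightarrow> nat) \<Rightarrow> nat \<Rightarrow> nat \<Rightarrow> nat \<Rightarrow> bool" where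
  "covers_below e t k s \<longleftrightarrow> (end_less 0 1 k s \<longrightarrow> end_covered e t 0 1) \<and>
      (\<forall>i<t. \<not> end_less (e i) 1 0 1 \<and> end_less (e i) 1 k s \<longrightarrow> end_covered e t (e i) 1)"

definition covers_above :: "(nat \<Rightarrow> nat) \<Rightarrow> nat \<Rightarrow> nat \<Rightarrow> nat \<Rightarrow> bool" where
  "covers_above e t k s \<longleftrightarrow> (end_less k s 20 1 \<longrightarrow> end_covered e t 20 1) \<and>
      (\<forall>i<t. end_less k s (e i) 0 \<and> \<not> end_less 20 1 (e i) 0 \<longrightarrow> end_covered e t (e i) 0)"

definition discards_code :: "(nat \<Rightarrow> nat) \<Rightarrow> nat \<Rightarrow> nat \<Rightarrow> bool" where
  "discards_code e t j \<longleftrightarrow> \<not> (covers_below e t 20 1 \<and> end_covered e t 20 1) \<and> j < t \<and>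
      (covers_below e t (e j) 1 \<or> covers_above e t (e j) 0)"

lemma covered_eq_intervals: "covered e t = (\<Union>i<t. {ball_end (e i) 0<..<ball_end (e i) 1})"
  unfolding covered_def rball_eq_ball_ends ..

lemma end_covered_iff: "end_covered e t k s \<longleftrightarrow> ball_end k s \<in> covered e t"
  unfolding end_covered_def mem_covered_iff end_less_iff ..

lemma covers_below_iff: "covers_below e t k s \<longleftrightarrow> {0..<ball_end k s} \<subseteq> covered e t"
  unfolding covers_below_def end_covered_iff end_less_iff ball_end_0 covered_eq_intervals
    cover_from_zero_iff
  by (auto simp: not_less)

lemma covers_above_iff: "covers_above e t k s \<longleftrightarrow> {ball_end k s<..1} \<subseteq> covered e t"
  unfolding covers_above_def end_covered_iff end_less_iff ball_end_20 covered_eq_intervals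
    cover_to_one_iff
  by (auto simp: not_less)

lemma discards_code_iff: "discards_code e t j \<longleftrightarrow> discards e t j"
proof -
  have "{0..1} \<subseteq> covered e t \<longleftrightarrow> {0..<1} \<subseteq> covered e t \<and> (1::real) \<in> covered e t"
    by (auto simp: subset_eq)
  then show ?thesis
    unfolding discards_code_def discards_def covers_below_iff covers_above_iff end_covered_iff ball_end_20
    by simp
qed

text \<open>Ball \<open>0\<close> is empty, so positions whose ball is not discarded contribute nothing.\<close>

definition discarded_ball :: "(nat \<Rightarrow> nat) \<Rightarrow> nat \<Rightarrow> nat" where
  "discarded_ball e n =
     (if discards e (snd (prod_decode n)) (fst (prod_decode n)) then e (fst (prod_decode n)) else 0)"

lemma delta_A_discarded_ball: "delta_A (discarded_ball e) = Some (trimmed e)"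
proof -
  have "(\<Union>n. rball (discarded_ball e n)) = (\<Union>(t, j) \<in> {(t, j). discards e t j}. rball (e j))"
  proof (intro equalityI subsetI)
    fix x assume "x \<in> (\<Union>n. rball (discarded_ball e n))"
    then show "x \<in> (\<Union>(t, j) \<in> {(t, j). discards e t j}. rball (e j))"
      unfolding discarded_ball_def by (auto simp: rball_0 split: if_splits)
  next
    fix x assume "x \<in> (\<Union>(t, j) \<in> {(t, j). discards e t j}. rball (e j))"
    then obtain t j where "discards e t j" "x \<in> rball (e j)" by auto
    then have "x \<in> rball (discarded_ball e (prod_encode (j, t)))" unfolding discarded_ball_def by simp
    then show "x \<in> (\<Union>n. rball (discarded_ball e n))" by blast
  qed
  then show ?thesis unfolding delta_A_def trimmed_def by simp
qed

lemma discarded_ball_cong: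
  assumes "\<And>j. j < snd (prod_decode n) \<Longrightarrow> e j = e' j"
  shows "discarded_ball e n = discarded_ball e' n"
proof -
  have "covered e t = covered e' t" if "t \<le> snd (prod_decode n)" for t
    using assms that unfolding covered_def by auto
  then show ?thesis using assms unfolding discarded_ball_def discards_def by auto
qed

lemma decidable_end_covered:
  assumes E: "recfun (\<lambda>w. E (fst (prod_decode w)) (snd (prod_decode w)))"
    and T: "recfun T" and K: "recfun K" and S: "recfun S"
  shows "decidable (\<lambda>z. end_covered (\<lambda>j. E j z) (T z) (K z) (S z))"
  unfolding end_covered_def
  by (intro decidable_ex decidable_conj decidable_end_less recfun_comp2[OF E] recfun_comp[OF K]
      recfun_comp[OF S] recfun_const recfun_fst recfun_snd recfun_id T)

lemma decidable_covers_below: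
  assumes E: "recfun (\<lambda>w. E (fst (prod_decode w)) (snd (prod_decode w)))"
    and T: "recfun T" and K: "recfun K" and S: "recfun S"
  shows "decidable (\<lambda>z. covers_below (\<lambda>j. E j z) (T z) (K z) (S z))"
  unfolding covers_below_def
  by (intro decidable_all decidable_conj decidable_imp decidable_not decidable_end_less
      decidable_end_covered recfun_comp2[OF E] recfun_comp[OF K] recfun_comp[OF S] recfun_comp[OF T]
      recfun_const recfun_fst recfun_snd recfun_id T K S)

lemma decidable_covers_above:
  assumes E: "recfun (\<lambda>w. E (fst (prod_decode w)) (snd (prod_decode w)))"
    and T: "recfun T" and K: "recfun K" and S: "recfun S"
  shows "decidable (\<lambda>z. covers_above (\<lambda>j. E j z) (T z) (K z) (S z))"
  unfolding covers_above_def
  by (intro decidable_all decidable_conj decidable_imp decidable_not decidable_end_less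
      decidable_end_covered recfun_comp2[OF E] recfun_comp[OF K] recfun_comp[OF S] recfun_comp[OF T]
      recfun_const recfun_fst recfun_snd recfun_id T K S)

lemma recfun_discarded_ball:
  assumes E: "recfun (\<lambda>w. E (fst (prod_decode w)) (snd (prod_decode w)))" and N: "recfun N"
  shows "recfun (\<lambda>z. discarded_ball (\<lambda>j. E j z) (N z))"
  unfolding discarded_ball_def discards_code_iff[symmetric] discards_code_def
  by (intro recfun_if decidable_conj decidable_disj decidable_not decidable_less decidable_covers_below
      decidable_covers_above decidable_end_covered recfun_comp2[OF E] recfun_const recfun_fst
      recfun_snd recfun_id N)

section \<open>Computable maps on Baire space\<close>

lemma computableI:
  assumes "recfun (\<lambda>w. g (fst (prod_decode w)) (snd (prod_decode w)))"
    and "\<And>p q n. F p = Some q \<Longrightarrow> (\<exists>k. g n (prefix_code p k) \<noteq> 0) \<and>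
        (\<forall>k. g n (prefix_code p k) \<noteq> 0 \<longrightarrow> g n (prefix_code p k) = Suc (q n))"
  shows "computable F"
proof -
  have "recursive 2 (\<lambda>xs. g (xs ! 0) (xs ! Suc 0))"
    using recursive_recfun[OF assms(1) recursive_prod_encode[OF recursive_proj recursive_proj]] by simp
  then obtain G where G: "partrec 2 G" "\<And>xs. length xs = 2 \<Longrightarrow> G xs = Some (g (xs ! 0) (xs ! Suc 0))"
    unfolding recursive_def by auto
  have "G [x, y] = Some (g x y)" for x y using G(2)[of "[x, y]"] by simp
  then show ?thesis unfolding computable_def using G(1) assms(2) by (intro exI[of _ G]) auto
qed

lemma computable_shift: "computable (\<lambda>p. Some (\<lambda>n. Suc (p n)))"
proof (rule computableI)
  show "recfun (\<lambda>w. if fst (prod_decode w) < length (list_decode (snd (prod_decode w)))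
     then Suc (Suc (code_nth (snd (prod_decode w)) (fst (prod_decode w)))) else 0)"
    by (intro recfun_if decidable_less recfun_length_list_decode recfun_Suc recfun_code_nth recfun_fst
        recfun_snd recfun_id recfun_const)
qed (auto simp: code_nth_prefix_code length_list_decode_prefix_code intro: exI[of _ "Suc n" for n])

lemma card_less_enumerate:
  fixes S :: "nat set"
  assumes "infinite S"
  shows "card {i \<in> S. i < enumerate S n} = n"
proof -
  have "{i \<in> S. i < enumerate S n} = enumerate S ` {..<n}"
  proof
    show "{i \<in> S. i < enumerate S n} \<subseteq> enumerate S ` {..<n}"
    proof
      fix i assume i: "i \<in> {i \<in> S. i < enumerate S n}"
      then obtain m where "enumerate S m = i" using enumerate_Ex[OF assms] by blast
      then show "i \<in> enumerate S ` {..<n}" using i assms by auto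
    qed
  qed (use assms enumerate_in_set[OF assms] in auto)
  moreover have "inj_on (enumerate S) {..<n}"
    using inj_enumerate[OF assms] by (rule inj_on_subset) simp
  ultimately show ?thesis by (simp add: card_image)
qed

lemma enumerate_eq_if_card_less:
  fixes S :: "nat set"
  assumes "infinite S" "j \<in> S" "card {i \<in> S. i < j} = n"
  shows "enumerate S n = j"
proof -
  obtain m where m: "enumerate S m = j" using enumerate_Ex[OF assms(1,2)] by blast
  then have "m = n" using card_less_enumerate[OF assms(1), of m] assms(3) by simp
  then show ?thesis using m by simp
qed

lemma card_less_Suc: "j \<in> S \<Longrightarrow> card {i \<in> S. i < Suc j} = Suc (card {i \<in> S. i < (j::nat)})"
proof -
  assume "j \<in> S"
  then have "{i \<in> S. i < Suc j} = insert j {i \<in> S. i < j}" by auto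
  then show ?thesis by simp
qed

lemma minus_one_Suc: "minus_one (\<lambda>n. Suc (p n)) = p"
proof -
  have "enumerate (UNIV :: nat set) n = n" for n
    by (rule enumerate_eq_if_card_less) (simp_all add: lessThan_def[symmetric])
  then show ?thesis unfolding minus_one_def by simp
qed

definition minus_one_partial :: "baire \<Rightarrow> baire option" where
  "minus_one_partial r = (if infinite {i. 0 < r i} then Some (minus_one r) else None)"

definition count_nonzero :: "nat \<Rightarrow> nat \<Rightarrow> nat" where
  "count_nonzero c k = (\<Sum>j<k. if 0 < code_nth c j then 1 else 0)"

text \<open>From a prefix of length at least \<open>enumerate {i. 0 < p i} n + 1\<close>, read off \<open>minus_one p n + 1\<close>.\<close>

definition minus_one_code :: "nat \<Rightarrow> nat \<Rightarrow> nat" where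
  "minus_one_code n c =
    (if n < count_nonzero c (length (list_decode c))
     then Suc (\<Sum>j<length (list_decode c).
                 if 0 < code_nth c j \<and> count_nonzero c j = n then code_nth c j - 1 else 0)
     else 0)"

lemma recfun_minus_one_code: "recfun (\<lambda>w. minus_one_code (fst (prod_decode w)) (snd (prod_decode w)))"
proof -
  have count: "recfun (\<lambda>z. count_nonzero (a z) (b z))" if "recfun a" "recfun b" for a b
    unfolding count_nonzero_def
    by (intro recfun_sum recfun_if decidable_less recfun_code_nth recfun_comp[OF that(1)] recfun_fst
        recfun_snd recfun_id recfun_const that(2))
  show ?thesis unfolding minus_one_code_def
    by (intro recfun_if decidable_less decidable_conj decidable_eq count recfun_length_list_decode
        recfun_Suc recfun_sum recfun_sub recfun_code_nth recfun_fst recfun_snd recfun_id recfun_const)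
qed

lemma count_nonzero_prefix_code:
  "j \<le> k \<Longrightarrow> count_nonzero (prefix_code p k) j = card {i \<in> {i. 0 < p i}. i < j}"
proof (induction j)
  case (Suc j)
  show ?case
  proof (cases "0 < p j")
    case True
    then show ?thesis using Suc card_less_Suc[of j "{i. 0 < p i}"]
      by (simp add: count_nonzero_def code_nth_prefix_code)
  next
    case False
    then have "{i \<in> {i. 0 < p i}. i < Suc j} = {i \<in> {i. 0 < p i}. i < j}" by (auto simp: less_Suc_eq)
    then show ?thesis using Suc False by (simp add: count_nonzero_def code_nth_prefix_code)
  qed
qed (simp add: count_nonzero_def)

lemma computable_minus_one_partial: "computable minus_one_partial"
proof (rule computableI[OF recfun_minus_one_code])
  fix p q n assume "minus_one_partial p = Some q"
  then have inf: "infinite {i. 0 < p i}" and q: "q = minus_one p"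
    unfolding minus_one_partial_def by (auto split: if_splits)
  define S where "S = {i. 0 < p i}"
  define E where "E = enumerate S n"
  have "infinite S" using inf unfolding S_def .
  have ES: "E \<in> S" unfolding E_def by (rule enumerate_in_set) fact
  have cE: "card {i \<in> S. i < E} = n" unfolding E_def by (rule card_less_enumerate) fact
  have "minus_one_code n (prefix_code p k) = (if n < card {i \<in> S. i < k}
     then Suc (\<Sum>j<k. if 0 < p j \<and> card {i \<in> S. i < j} = n then p j - 1 else 0) else 0)" for k
    unfolding minus_one_code_def length_list_decode_prefix_code
      count_nonzero_prefix_code[OF order_refl] S_def
    by (auto simp: code_nth_prefix_code count_nonzero_prefix_code intro!: sum.cong)
  also have "\<dots>k = (if E < k then Suc (q n) else 0)" for k
  proof -
    have "(0 < p j \<and> card {i \<in> S. i < j} = n) \<longleftrightarrow> j = E" for j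
      using enumerate_eq_if_card_less[OF \<open>infinite S\<close>, of j n] ES cE unfolding E_def S_def by auto
    moreover have "n < card {i \<in> S. i < k} \<longleftrightarrow> E < k"
    proof
      assume n: "n < card {i \<in> S. i < k}"
      show "E < k"
      proof (rule ccontr)
        assume "\<not> E < k"
        then have "card {i \<in> S. i < k} \<le> card {i \<in> S. i < E}" by (intro card_mono) auto
        then show False using n cE by simp
      qed
    next
      assume "E < k"
      then have "card {i \<in> S. i < Suc E} \<le> card {i \<in> S. i < k}" by (intro card_mono) auto
      then show "n < card {i \<in> S. i < k}" using card_less_Suc[OF ES] cE by simp
    qed
    ultimately show ?thesis
      unfolding q minus_one_def E_def S_def by (simp add: sum.delta cong: if_cong)
  qed
  finally show "(\<exists>k. minus_one_code n (prefix_code p k) \<noteq> 0) \<and>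
      (\<forall>k. minus_one_code n (prefix_code p k) \<noteq> 0 \<longrightarrow> minus_one_code n (prefix_code p k) = Suc (q n))"
    by auto
qed

text \<open>For \<open>d = 0\<close> the input is read as a name in the completion of \<open>delta_A\<close> (the entry \<open>0\<close> meaning
  no information, and \<open>0 - 1\<close> naming the empty ball) and the output is a \<open>delta_A\<close>-name; for
  \<open>d = 1\<close> the input is a \<open>delta_A\<close>-name and the output a name in the completion.\<close>

definition trim_name :: "nat \<Rightarrow> baire \<Rightarrow> baire option" where
  "trim_name d p = Some (\<lambda>n. d + discarded_ball (\<lambda>j. p j + d - 1) n)"

definition trim_code :: "nat \<Rightarrow> nat \<Rightarrow> nat \<Rightarrow> nat" where
  "trim_code d n c =
    (if snd (prod_decode n) \<le> length (list_decode c)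
     then Suc (d + discarded_ball (\<lambda>j. code_nth c j + d - 1) n) else 0)"

lemma computable_trim_name: "computable (trim_name d)"
proof (rule computableI)
  have "recfun (\<lambda>w. code_nth (snd (prod_decode (snd (prod_decode w)))) (fst (prod_decode w)) + d - 1)"
    by (intro recfun_sub recfun_add recfun_code_nth recfun_fst recfun_snd recfun_const recfun_id)
  then show "recfun (\<lambda>w. trim_code d (fst (prod_decode w)) (snd (prod_decode w)))"
    unfolding trim_code_def
    by (intro recfun_if decidable_le recfun_Suc recfun_add recfun_discarded_ball recfun_length_list_decode
        recfun_const recfun_fst recfun_snd recfun_id)
next
  fix p q n assume "trim_name d p = Some q"
  then have q: "q = (\<lambda>n. d + discarded_ball (\<lambda>j. p j + d - 1) n)" unfolding trim_name_def by simp
  have "trim_code d n (prefix_code p k) = (if snd (prod_decode n) \<le> k then Suc (q n) else 0)" for k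
  proof (cases "snd (prod_decode n) \<le> k")
    case True
    then have "discarded_ball (\<lambda>j. code_nth (prefix_code p k) j + d - 1) n
        = discarded_ball (\<lambda>j. p j + d - 1) n"
      by (intro discarded_ball_cong) (simp add: code_nth_prefix_code)
    then show ?thesis using True unfolding trim_code_def q by (simp add: length_list_decode_prefix_code)
  qed (simp add: trim_code_def length_list_decode_prefix_code)
  then show "(\<exists>k. trim_code d n (prefix_code p k) \<noteq> 0) \<and>
      (\<forall>k. trim_code d n (prefix_code p k) \<noteq> 0 \<longrightarrow> trim_code d n (prefix_code p k) = Suc (q n))"
    by auto
qed


section \<open>The reductions\<close>

lemma rspaceI: "\<delta> p = Some x \<Longrightarrow> x \<in> rspace \<delta>"
  unfolding rspace_def by auto

lemma compl_rep_shift: "compl_rep \<delta> (\<lambda>n. Suc (r n)) = Some (\<delta> r)"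
  unfolding compl_rep_def by (simp add: minus_one_Suc)

lemma ConC_trimmed: "ConC (trimmed e) = trimmed e"
  unfolding ConC_def using trimmed_nonempty connected_trimmed closed_trimmed
  by (auto simp: mem_trimmed_iff)

lemma ConC_nonemptyD: "ConC A \<noteq> {} \<Longrightarrow> ConC A = A \<and> A \<noteq> {} \<and> connected A"
  unfolding ConC_def by (auto split: if_splits)

lemma delta_A_minus_one:
  assumes "infinite {i. 0 < p i}"
  shows "delta_A (minus_one p) = Some ({0..1} - (\<Union>j. rball (p j - 1)))"
proof -
  have "(\<Union>n. rball (minus_one p n)) = (\<Union>j. rball (p j - 1))"
  proof (intro equalityI subsetI)
    fix x assume "x \<in> (\<Union>j. rball (p j - 1))"
    then obtain j where j: "x \<in> rball (p j - 1)" by auto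
    then have "0 < p j" using rball_0 by (cases "p j") auto
    then obtain n where "enumerate {i. 0 < p i} n = j" using enumerate_Ex[OF assms] by blast
    then show "x \<in> (\<Union>n. rball (minus_one p n))" using j unfolding minus_one_def by auto
  qed (auto simp: minus_one_def)
  then show ?thesis unfolding delta_A_def by simp
qed

text \<open>Trim the input, ask for a point of the trimmed set, and drop the zeros of the answer.\<close>

lemma sW_le_compl_ConC:
  assumes "\<And>A. A \<in> rspace delta_A \<Longrightarrow> f A \<noteq> {} \<Longrightarrow> ConC A \<noteq> {} \<and> A \<subseteq> f A \<or> rspace delta_I \<subseteq> f A"
  shows "sW_le delta_A delta_I f (compl_rep delta_A) (compl_rep delta_I) (compl_prob delta_A delta_I ConC)"
  unfolding sW_le_def
proof (intro exI conjI allI impI)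
  fix G assume G: "realizes (compl_rep delta_A) (compl_rep delta_I) G (compl_prob delta_A delta_I ConC)"
  show "realizes delta_A delta_I (\<lambda>p. Option.bind (trim_name 1 p) (\<lambda>r. Option.bind (G r) minus_one_partial)) f"
    unfolding realizes_def
  proof (intro allI impI)
    fix p A assume pA: "delta_A p = Some A" and "f A \<noteq> {}"
    let ?q = "\<lambda>n. Suc (discarded_ball p n)"
    have q: "trim_name 1 p = Some ?q" unfolding trim_name_def by simp
    have named: "compl_rep delta_A ?q = Some (Some (trimmed p))"
      by (simp add: compl_rep_shift delta_A_discarded_ball)
    have prob: "compl_prob delta_A delta_I ConC (Some (trimmed p)) = Some ` trimmed p"
      unfolding compl_prob_def using rspaceI[of delta_A, OF delta_A_discarded_ball] trimmed_nonempty
      by (simp add: ConC_trimmed)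
    then have "compl_prob delta_A delta_I ConC (Some (trimmed p)) \<noteq> {}"
      using trimmed_nonempty by simp
    from G[unfolded realizes_def, rule_format, OF named this] prob
    obtain r y where r: "G ?q = Some r" "compl_rep delta_I r = Some (Some y)" and "y \<in> trimmed p"
      by auto
    then have r': "minus_one_partial r = Some (minus_one r)" "delta_I (minus_one r) = Some y"
      unfolding compl_rep_def minus_one_partial_def by (auto split: if_splits)
    have "y \<in> f A"
      using assms[OF rspaceI[of delta_A p, OF pA] \<open>f A \<noteq> {}\<close>]
    proof
      assume conc: "ConC A \<noteq> {} \<and> A \<subseteq> f A"
      have A: "A = {0..1} - (\<Union>j. rball (p j))" using pA unfolding delta_A_def by simp
      have "trimmed p = A" by (rule trimmed_eq[OF A]) (use ConC_nonemptyD[of A] conc in auto)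
      then show "y \<in> f A" using \<open>y \<in> trimmed p\<close> conc by auto
    qed (use rspaceI[of delta_I "minus_one r", OF r'(2)] in auto)
    then show "\<exists>q y. Option.bind (trim_name 1 p) (\<lambda>r. Option.bind (G r) minus_one_partial) = Some q
        \<and> delta_I q = Some y \<and> y \<in> f A"
      using q r r' by auto
  qed
qed (rule computable_minus_one_partial, rule computable_trim_name)

text \<open>Trim the name from the completion, which always yields a name in the domain of \<open>ConC\<close>, and
  shift the answer into the completion.\<close>

lemma compl_ConC_sW_le:
  assumes "\<And>A. A \<in> rspace delta_A \<Longrightarrow> ConC A \<noteq> {} \<Longrightarrow> g A = A"
  shows "sW_le (compl_rep delta_A) (compl_rep delta_I) (compl_prob delta_A delta_I ConC) delta_A delta_I g"
  unfolding sW_le_def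
proof (intro exI conjI allI impI)
  fix G assume G: "realizes delta_A delta_I G g"
  show "realizes (compl_rep delta_A) (compl_rep delta_I)
      (\<lambda>p. Option.bind (trim_name 0 p) (\<lambda>r. Option.bind (G r) (\<lambda>p. Some (\<lambda>n. Suc (p n)))))
      (compl_prob delta_A delta_I ConC)"
    unfolding realizes_def
  proof (intro allI impI)
    fix p x assume px: "compl_rep delta_A p = Some x"
    define e where "e = (\<lambda>j. p j - 1)"
    have q: "trim_name 0 p = Some (discarded_ball e)" unfolding trim_name_def e_def by simp
    have "g (trimmed e) = trimmed e"
      using assms rspaceI[of delta_A, OF delta_A_discarded_ball] ConC_trimmed trimmed_nonempty by metis
    with G[unfolded realizes_def, rule_format, OF delta_A_discarded_ball[of e]] trimmed_nonempty[of e]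
    obtain r y where r: "G (discarded_ball e) = Some r" "delta_I r = Some y" and "y \<in> trimmed e"
      by auto
    have "Some y \<in> compl_prob delta_A delta_I ConC x"
    proof (cases "\<exists>A. x = Some A \<and> A \<in> rspace delta_A \<and> ConC A \<noteq> {}")
      case True
      then obtain A where A: "x = Some A" "ConC A \<noteq> {}" "A \<in> rspace delta_A" by auto
      then have "infinite {i. 0 < p i}" "delta_A (minus_one p) = Some A"
        using px unfolding compl_rep_def by (auto split: if_splits)
      then have "A = {0..1} - (\<Union>j. rball (e j))" using delta_A_minus_one unfolding e_def by simp
      then have "trimmed e = A" by (rule trimmed_eq) (use ConC_nonemptyD[OF A(2)] in auto)
      then show ?thesis using \<open>y \<in> trimmed e\<close> A ConC_nonemptyD[OF A(2)] unfolding compl_prob_def by auto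
    next
      case False
      then have "compl_prob delta_A delta_I ConC x = rspace (compl_rep delta_I)"
        unfolding compl_prob_def by (cases x) auto
      then show ?thesis using rspaceI[of "compl_rep delta_I" "\<lambda>n. Suc (r n)"] r(2)
        by (simp add: compl_rep_shift)
    qed
    then show "\<exists>q y. Option.bind (trim_name 0 p) (\<lambda>r. Option.bind (G r) (\<lambda>p. Some (\<lambda>n. Suc (p n))))
        = Some q \<and> compl_rep delta_I q = Some y \<and> y \<in> compl_prob delta_A delta_I ConC x"
      using q r by (auto simp: compl_rep_shift)
  qed
qed (rule computable_shift, rule computable_trim_name)

theorem proposition6p6:
  shows "sW_eq delta_A delta_I ConC
           (compl_rep delta_A) (compl_rep delta_I) (compl_prob delta_A delta_I ConC)
       \<and> sW_eq (compl_rep delta_A) (compl_rep delta_I) (compl_prob delta_A delta_I ConC)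
           delta_A delta_I (T_prob delta_A delta_I ConC)"
proof -
  have ConC: "ConC A \<noteq> {} \<Longrightarrow> ConC A = A" for A using ConC_nonemptyD by blast
  have T_ConC: "A \<in> rspace delta_A \<Longrightarrow> ConC A \<noteq> {} \<Longrightarrow> T_prob delta_A delta_I ConC A = A" for A
    unfolding T_prob_def using ConC by simp
  have T_cases: "ConC A \<noteq> {} \<and> A \<subseteq> T_prob delta_A delta_I ConC A \<or> rspace delta_I \<subseteq> T_prob delta_A delta_I ConC A"
    if "A \<in> rspace delta_A" for A
    using T_ConC[OF that] by (cases "ConC A = {}") (auto simp: T_prob_def)
  show ?thesis
    unfolding sW_eq_def
    using sW_le_compl_ConC[of ConC] compl_ConC_sW_le[of ConC]
      sW_le_compl_ConC[of "T_prob delta_A delta_I ConC"] compl_ConC_sW_le[of "T_prob delta_A delta_I ConC"]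
      ConC T_ConC T_cases
    by blast
qed

end
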